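(* Let $n>m\geq 2$ and let $X$ be a random variable on $\mathcal{X}=\{x_1,\ldots,x_n\}$ with distribution $\mathbf{p}=(p_1,\ldots,p_n)$, where $p_1\geq\cdots\geq p_n\geq 0$. Then for every $f\in\mathcal{F}_m$, $$H(f(X))\leq H(R_m(\mathbf{p})).$$
   Context: $H$ is Shannon entropy in bits. $\mathcal{F}_m$ is the set of surjective functions from $\mathcal{X}$ onto a fixed $m$-element set. Definition of $R_m(\mathbf{p})=(r_1,\ldots,r_m)$: if $p_1<1/m$, then $R_m(\mathbf{p})=(1/m,\ldots,1/m)$. If $p_1\geq 1/m$, let $i^*$ be the maximum index $i\in\{1,\ldots,m-1\}$ with $p_i\geq \frac{\sum_{j=i+1}^n p_j}{m-i}$. Then $r_i=p_i$ for $i\leq i^*$ and $r_i=\frac{\sum_{j=i^*+1}^n p_j}{m-i^*}$ for $i=i^*+1,\ldots,m$. *)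

theory Defs
  imports Complex_Main
begin

definition entropy_bits :: "nat \<Rightarrow> (nat \<Rightarrow> real) \<Rightarrow> real" where
  "entropy_bits k q = - (\<Sum>i=1..k. if q i = 0 then 0 else q i * log 2 (q i))"

definition push_dist :: "nat \<Rightarrow> (nat \<Rightarrow> nat) \<Rightarrow> (nat \<Rightarrow> real) \<Rightarrow> nat \<Rightarrow> real" where
  "push_dist n f p j = (\<Sum>i\<in>{i\<in>{1..n}. f i = j}. p i)"

definition istar :: "nat \<Rightarrow> nat \<Rightarrow> (nat \<Rightarrow> real) \<Rightarrow> nat" where
  "istar n m p = Max {i\<in>{1..m-1}. p i \<ge> (\<Sum>j=i+1..n. p j) / real (m - i)}"

definition R_m :: "nat \<Rightarrow> nat \<Rightarrow> (nat \<Rightarrow> real) \<Rightarrow> nat \<Rightarrow> real" where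
  "R_m n m p = (if p 1 < 1 / real m then (\<lambda>i. 1 / real m)
     else (\<lambda>i. if i \<le> istar n m p then p i
                else (\<Sum>j=istar n m p + 1..n. p j) / real (m - istar n m p)))"

end

theory Submission
  imports Defs
begin

text \<open>Let \<open>l j\<close> be the least preimage of \<open>j\<close> under \<open>f\<close>. If \<open>r\<close> is nonincreasing on
  \<open>{1..n}\<close> and \<open>r 1 + \<dots> + r m \<le> 1\<close>, then \<open>j \<mapsto> r (l j)\<close> is a sub-probability vector on
  \<open>{1..m}\<close>, because \<open>l\<close> picks \<open>m\<close> distinct indices. Gibbs' inequality bounds \<open>H(f(X))\<close> by
  the cross entropy \<open>-\<Sum>\<^sub>i p i log r (l (f i))\<close>, and \<open>l (f i) \<le> i\<close> bounds this by
  \<open>-\<Sum>\<^sub>i p i log r i\<close>. The vector \<open>R\<^sub>m(p)\<close>, continued to \<open>{1..n}\<close> by its tail value, is such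
  an \<open>r\<close>; as it agrees with \<open>p\<close> on the head and is constant on the tail, where it carries the
  same mass as \<open>p\<close>, the last cross entropy is exactly \<open>H(R\<^sub>m(p))\<close>.\<close>

text \<open>The convention \<open>0 log 0 = 0\<close> is automatic in HOL, since \<open>0 * _ = 0\<close>.\<close>
lemma entropy_bits_eq: "entropy_bits k q = - (\<Sum>i=1..k. q i * log 2 (q i))"
  unfolding entropy_bits_def by (intro arg_cong[where f = uminus] sum.cong) auto

lemma sum_atLeastAtMost_split:
  fixes g :: "nat \<Rightarrow> 'a::comm_monoid_add"
  assumes "k \<le> n"
  shows "(\<Sum>i=1..n. g i) = (\<Sum>i=1..k. g i) + (\<Sum>i=k+1..n. g i)"
  using sum.ub_add_nat[of 1 k g "n - k"] assms by simp

lemma gibbs_inequality: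
  fixes q r :: "'a \<Rightarrow> real"
  assumes q_nonneg: "\<And>j. j \<in> A \<Longrightarrow> q j \<ge> 0" and r_nonneg: "\<And>j. j \<in> A \<Longrightarrow> r j \<ge> 0"
    and r_pos: "\<And>j. j \<in> A \<Longrightarrow> q j > 0 \<Longrightarrow> r j > 0"
    and q_sum: "sum q A = 1" and r_sum: "sum r A \<le> 1"
  shows "- (\<Sum>j\<in>A. q j * log 2 (q j)) \<le> - (\<Sum>j\<in>A. q j * log 2 (r j))"
proof -
  have termwise: "(q j - r j) / ln 2 \<le> q j * log 2 (q j) - q j * log 2 (r j)" if "j \<in> A" for j
  proof (cases "q j = 0")
    case True
    then show ?thesis using r_nonneg[OF that] by simp
  next
    case False
    then have qj: "q j > 0" using q_nonneg[OF that] by simp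
    have rj: "r j > 0" using r_pos[OF that qj] .
    have "q j * ln (r j / q j) \<le> q j * (r j / q j - 1)"
      using ln_le_minus_one[of "r j / q j"] qj rj by (simp add: mult_left_mono)
    also have "\<dots> = r j - q j" using qj by (simp add: field_simps)
    finally have "q j - r j \<le> q j * ln (q j) - q j * ln (r j)"
      using qj rj by (simp add: ln_div algebra_simps)
    then have "(q j - r j) / ln 2 \<le> (q j * ln (q j) - q j * ln (r j)) / ln 2"
      by (rule divide_right_mono) simp
    then show ?thesis by (simp add: log_def diff_divide_distrib)
  qed
  have "0 \<le> (sum q A - sum r A) / ln 2" using q_sum r_sum by simp
  also have "\<dots> = (\<Sum>j\<in>A. (q j - r j) / ln 2)"
    by (simp add: sum_divide_distrib[symmetric] sum_subtractf)
  also have "\<dots> \<le> (\<Sum>j\<in>A. q j * log 2 (q j) - q j * log 2 (r j))"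
    by (rule sum_mono) (rule termwise)
  finally show ?thesis by (simp add: sum_subtractf)
qed

lemma sum_antitone_le_initial_segment:
  fixes r :: "nat \<Rightarrow> real"
  assumes "\<And>i j. 1 \<le> i \<Longrightarrow> i \<le> j \<Longrightarrow> j \<le> n \<Longrightarrow> r j \<le> r i" and "L \<subseteq> {1..n}"
  shows "sum r L \<le> (\<Sum>i=1..card L. r i)"
  using assms
proof (induction n arbitrary: L)
  case 0
  then show ?case by simp
next
  case (Suc n)
  show ?case
  proof (cases "Suc n \<in> L")
    case False
    then have "L \<subseteq> {1..n}" using Suc.prems(2) by (auto simp: subset_iff le_Suc_eq)
    then show ?thesis using Suc.IH Suc.prems(1) by simp
  next
    case True
    define L' where "L' = L - {Suc n}"
    have fin: "finite L" using Suc.prems(2) finite_subset by blast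
    have card_L: "card L = Suc (card L')" unfolding L'_def using card_Suc_Diff1[OF fin True] by simp
    have "L' \<subseteq> {1..n}" using Suc.prems(2) by (auto simp: L'_def subset_iff le_Suc_eq)
    then have IH: "sum r L' \<le> (\<Sum>i=1..card L'. r i)"
      by (rule Suc.IH[rotated]) (use Suc.prems(1) in auto)
    have "card L \<le> Suc n" using card_mono[OF _ Suc.prems(2)] by simp
    then have "r (Suc n) \<le> r (card L)" using Suc.prems(1) card_L by simp
    moreover have "sum r L = r (Suc n) + sum r L'"
      using True fin by (simp add: L'_def sum.remove)
    ultimately show ?thesis using IH card_L by simp
  qed
qed

lemma sum_push_dist:
  assumes "f ` {1..n} \<subseteq> {1..m}"
  shows "(\<Sum>j=1..m. push_dist n f p j * g j) = (\<Sum>i=1..n. p i * g (f i))"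
proof -
  have "(\<Sum>j=1..m. push_dist n f p j * g j) = (\<Sum>j=1..m. \<Sum>i\<in>{i\<in>{1..n}. f i = j}. p i * g (f i))"
    unfolding push_dist_def by (intro sum.cong refl) (auto simp: sum_distrib_right)
  also have "\<dots> = (\<Sum>i=1..n. p i * g (f i))"
    using sum.group[OF _ _ assms, of "\<lambda>i. p i * g (f i)"] by simp
  finally show ?thesis .
qed

lemma push_dist_pos_obtains_preimage:
  assumes "push_dist n f p j > 0"
  obtains i where "i \<in> {1..n}" "f i = j" "p i > 0"
proof -
  have "\<not> (\<forall>i\<in>{i\<in>{1..n}. f i = j}. p i \<le> 0)"
  proof
    assume "\<forall>i\<in>{i\<in>{1..n}. f i = j}. p i \<le> 0"
    then have "push_dist n f p j \<le> 0" unfolding push_dist_def by (intro sum_nonpos) blast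
    with assms show False by simp
  qed
  then show thesis using that by force
qed

lemma entropy_push_dist_le_cross_entropy:
  assumes f_into: "f ` {1..n} \<subseteq> {1..m}"
    and p_nonneg: "\<And>i. i \<in> {1..n} \<Longrightarrow> p i \<ge> 0" and p_sum: "(\<Sum>i=1..n. p i) = 1"
    and r_nonneg: "\<And>j. j \<in> {1..m} \<Longrightarrow> r j \<ge> 0" and r_sum: "(\<Sum>j=1..m. r j) \<le> 1"
    and r_pos: "\<And>j. j \<in> {1..m} \<Longrightarrow> push_dist n f p j > 0 \<Longrightarrow> r j > 0"
  shows "entropy_bits m (push_dist n f p) \<le> - (\<Sum>i=1..n. p i * log 2 (r (f i)))"
proof -
  have "(\<Sum>j=1..m. push_dist n f p j) = 1"
    using sum_push_dist[OF f_into, of p "\<lambda>_. 1"] p_sum by simp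
  moreover have "push_dist n f p j \<ge> 0" for j
    unfolding push_dist_def using p_nonneg by (intro sum_nonneg) auto
  ultimately have "entropy_bits m (push_dist n f p)
      \<le> - (\<Sum>j=1..m. push_dist n f p j * log 2 (r j))"
    unfolding entropy_bits_eq using r_nonneg r_pos r_sum by (intro gibbs_inequality) auto
  then show ?thesis using sum_push_dist[OF f_into, of p "\<lambda>j. log 2 (r j)"] by simp
qed

lemma entropy_push_dist_le_antitone_cross_entropy:
  assumes f_onto: "f ` {1..n} = {1..m}"
    and p_nonneg: "\<And>i. i \<in> {1..n} \<Longrightarrow> p i \<ge> 0" and p_sum: "(\<Sum>i=1..n. p i) = 1"
    and r_nonneg: "\<And>i. i \<in> {1..n} \<Longrightarrow> r i \<ge> 0"
    and r_antitone: "\<And>i j. 1 \<le> i \<Longrightarrow> i \<le> j \<Longrightarrow> j \<le> n \<Longrightarrow> r j \<le> r i"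
    and r_sum: "(\<Sum>i=1..m. r i) \<le> 1"
    and r_pos: "\<And>i. i \<in> {1..n} \<Longrightarrow> p i > 0 \<Longrightarrow> r i > 0"
  shows "entropy_bits m (push_dist n f p) \<le> - (\<Sum>i=1..n. p i * log 2 (r i))"
proof -
  define l where "l j = Min {i\<in>{1..n}. f i = j}" for j
  have l_in: "l j \<in> {1..n}" and f_l: "f (l j) = j" if "j \<in> {1..m}" for j
  proof -
    have "j \<in> f ` {1..n}" using that f_onto by simp
    then have "{i\<in>{1..n}. f i = j} \<noteq> {}" by blast
    then have "l j \<in> {i\<in>{1..n}. f i = j}" unfolding l_def by (intro Min_in) auto
    then show "l j \<in> {1..n}" "f (l j) = j" by auto
  qed
  have l_f_le: "l (f i) \<le> i" if "i \<in> {1..n}" for i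
    unfolding l_def using that by (intro Min_le) auto
  have f_in: "f i \<in> {1..m}" if "i \<in> {1..n}" for i using that f_onto by blast
  have r_l_ge: "r i \<le> r (l (f i))" if "i \<in> {1..n}" for i
    using r_antitone[of "l (f i)" i] l_in[OF f_in[OF that]] l_f_le[OF that] that by simp
  have inj_l: "inj_on l {1..m}" by (rule inj_on_inverseI[where g = f]) (rule f_l)
  have "(\<Sum>j=1..m. r (l j)) = sum r (l ` {1..m})" using sum.reindex[OF inj_l, of r] by simp
  also have "\<dots> \<le> (\<Sum>i=1..m. r i)"
  proof -
    have "sum r (l ` {1..m}) \<le> (\<Sum>i=1..card (l ` {1..m}). r i)"
      by (rule sum_antitone_le_initial_segment[where n = n]) (use r_antitone l_in in auto)
    then show ?thesis using card_image[OF inj_l] by simp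
  qed
  finally have rl_sum: "(\<Sum>j=1..m. r (l j)) \<le> 1" using r_sum by simp
  have rl_pos: "r (l j) > 0" if j: "j \<in> {1..m}" and "push_dist n f p j > 0" for j
  proof -
    obtain i where i: "i \<in> {1..n}" "f i = j" "p i > 0"
      using push_dist_pos_obtains_preimage[OF \<open>push_dist n f p j > 0\<close>] .
    then show ?thesis using r_l_ge[OF i(1)] r_pos[OF i(1,3)] by simp
  qed
  have "entropy_bits m (push_dist n f p) \<le> - (\<Sum>i=1..n. p i * log 2 (r (l (f i))))"
    using l_in r_nonneg rl_sum rl_pos
    by (intro entropy_push_dist_le_cross_entropy[OF equalityD1[OF f_onto] p_nonneg p_sum]) auto
  also have "\<dots> \<le> - (\<Sum>i=1..n. p i * log 2 (r i))"
  proof -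
    have "p i * log 2 (r i) \<le> p i * log 2 (r (l (f i)))" if i: "i \<in> {1..n}" for i
    proof (cases "p i = 0")
      case False
      then have "p i > 0" using p_nonneg[OF i] by simp
      moreover have "log 2 (r i) \<le> log 2 (r (l (f i)))"
        using r_pos[OF i \<open>p i > 0\<close>] r_l_ge[OF i] by simp
      ultimately show ?thesis by (simp add: mult_left_mono)
    qed simp
    then show ?thesis by (meson le_imp_neg_le sum_mono)
  qed
  finally show ?thesis .
qed

text \<open>\<open>flattened\<close> is \<open>R\<^sub>m(p)\<close> computed with \<open>i* = k\<close>, extended to \<open>{1..n}\<close> by its tail value;
  \<open>k = 0\<close> gives the uniform vector of the case \<open>p\<^sub>1 < 1/m\<close>.\<close>
locale tail_flattening =
  fixes n m k :: nat and p :: "nat \<Rightarrow> real"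
  assumes k_less_m: "k < m" and m_le_n: "m \<le> n"
    and p_nonneg: "\<And>i. i \<in> {1..n} \<Longrightarrow> p i \<ge> 0"
    and p_sum: "(\<Sum>i=1..n. p i) = 1"
    and p_antitone: "\<And>i j. 1 \<le> i \<Longrightarrow> i \<le> j \<Longrightarrow> j \<le> n \<Longrightarrow> p j \<le> p i"
    and tail_average_le_p_k: "1 \<le> k \<Longrightarrow> (\<Sum>j=k+1..n. p j) / real (m - k) \<le> p k"
begin

definition tail_average :: real where
  "tail_average = (\<Sum>j=k+1..n. p j) / real (m - k)"

definition flattened :: "nat \<Rightarrow> real" where
  "flattened i = (if i \<le> k then p i else tail_average)"

lemma tail_mass: "(\<Sum>j=k+1..n. p j) = real (m - k) * tail_average"
  using k_less_m by (simp add: tail_average_def)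

lemma tail_average_le_head: "1 \<le> i \<Longrightarrow> i \<le> k \<Longrightarrow> tail_average \<le> p i"
  using tail_average_le_p_k p_antitone[of i k] k_less_m m_le_n by (simp add: tail_average_def)

lemma tail_average_nonneg: "tail_average \<ge> 0"
  unfolding tail_average_def using p_nonneg by (intro divide_nonneg_nonneg sum_nonneg) auto

lemma flattened_nonneg: "i \<in> {1..n} \<Longrightarrow> flattened i \<ge> 0"
  using p_nonneg tail_average_nonneg by (simp add: flattened_def)

lemma flattened_antitone: "1 \<le> i \<Longrightarrow> i \<le> j \<Longrightarrow> j \<le> n \<Longrightarrow> flattened j \<le> flattened i"
  using p_antitone tail_average_le_head by (auto simp: flattened_def)

lemma flattened_pos: "i \<in> {1..n} \<Longrightarrow> p i > 0 \<Longrightarrow> flattened i > 0"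
proof (cases "i \<le> k")
  case False
  assume i: "i \<in> {1..n}" and "p i > 0"
  then have "0 < (\<Sum>j=k+1..n. p j)"
    using False p_nonneg by (intro sum_pos2[of _ i]) auto
  then show ?thesis using False tail_mass by (simp add: flattened_def zero_less_mult_iff)
qed (simp add: flattened_def)

lemma sum_flattened_split:
  assumes "k \<le> N"
  shows "(\<Sum>i=1..N. g i (flattened i)) = (\<Sum>i=1..k. g i (p i)) + (\<Sum>i=k+1..N. g i tail_average)"
proof -
  have "(\<Sum>i=1..k. g i (flattened i)) = (\<Sum>i=1..k. g i (p i))"
    by (intro sum.cong) (auto simp: flattened_def)
  moreover have "(\<Sum>i=k+1..N. g i (flattened i)) = (\<Sum>i=k+1..N. g i tail_average)"
    by (intro sum.cong) (auto simp: flattened_def)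
  ultimately show ?thesis
    using sum_atLeastAtMost_split[OF assms, of "\<lambda>i. g i (flattened i)"] by simp
qed

lemma sum_flattened: "(\<Sum>i=1..m. flattened i) = 1"
proof -
  have "(\<Sum>i=1..m. flattened i) = (\<Sum>i=1..k. p i) + real (m - k) * tail_average"
    using sum_flattened_split[of m "\<lambda>_ x. x"] k_less_m by simp
  also have "\<dots> = 1"
    using sum_atLeastAtMost_split[of k n p] k_less_m m_le_n p_sum tail_mass by simp
  finally show ?thesis .
qed

lemma cross_entropy_flattened:
  "(\<Sum>i=1..n. p i * log 2 (flattened i)) = - entropy_bits m flattened"
proof -
  define head where "head = (\<Sum>i=1..k. p i * log 2 (p i))"
  have "(\<Sum>i=1..n. p i * log 2 (flattened i)) = head + (\<Sum>j=k+1..n. p j) * log 2 tail_average"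
    using sum_flattened_split[of n "\<lambda>i x. p i * log 2 x"] k_less_m m_le_n
    by (simp add: head_def sum_distrib_right)
  also have "\<dots> = head + real (m - k) * (tail_average * log 2 tail_average)"
    using tail_mass by simp
  also have "\<dots> = (\<Sum>i=1..m. flattened i * log 2 (flattened i))"
    using sum_flattened_split[of m "\<lambda>_ x. x * log 2 x"] k_less_m by (simp add: head_def)
  finally show ?thesis by (simp add: entropy_bits_eq)
qed

lemma entropy_push_dist_le_entropy_flattened:
  assumes "f ` {1..n} = {1..m}"
  shows "entropy_bits m (push_dist n f p) \<le> entropy_bits m flattened"
proof -
  have "entropy_bits m (push_dist n f p) \<le> - (\<Sum>i=1..n. p i * log 2 (flattened i))"
    by (rule entropy_push_dist_le_antitone_cross_entropy[OF assms p_nonneg p_sum, where r = flattened])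
      (use sum_flattened in \<open>simp_all add: flattened_nonneg flattened_antitone flattened_pos\<close>)
  then show ?thesis using cross_entropy_flattened by simp
qed

end

lemma R_m_eq_flattened:
  assumes m_less_n: "m < n" and m_ge_2: "2 \<le> m"
    and "\<And>i. i \<in> {1..n} \<Longrightarrow> p i \<ge> 0"
    and p_sum: "(\<Sum>i=1..n. p i) = 1"
    and "\<And>i j. 1 \<le> i \<Longrightarrow> i \<le> j \<Longrightarrow> j \<le> n \<Longrightarrow> p j \<le> p i"
  obtains k where "tail_flattening n m k p"
    and "\<And>i. i \<in> {1..m} \<Longrightarrow> R_m n m p i = tail_flattening.flattened n m k p i"
proof (cases "p 1 < 1 / real m")
  case True
  interpret tail_flattening n m 0 p
    using assms by unfold_locales auto
  have "R_m n m p i = flattened i" if "i \<in> {1..m}" for i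
    using True that p_sum by (simp add: R_m_def flattened_def tail_average_def)
  then show thesis using that tail_flattening_axioms by blast
next
  case False
  define S where "S = {i\<in>{1..m-1}. (\<Sum>j=i+1..n. p j) / real (m - i) \<le> p i}"
  have tail: "(\<Sum>j=1+1..n. p j) = 1 - p 1"
    using sum_atLeastAtMost_split[of 1 n p] m_less_n p_sum by simp
  have "1 \<le> real m * p 1" using False m_ge_2 by (simp add: field_simps)
  then have "(1 - p 1) / real (m - 1) \<le> p 1"
    using m_ge_2 by (simp add: divide_le_eq of_nat_diff algebra_simps)
  then have "1 \<in> S" unfolding S_def using tail m_ge_2 by simp
  then have "istar n m p \<in> S"
    unfolding istar_def S_def[symmetric] by (intro Max_in) (auto simp: S_def)
  then interpret tail_flattening n m "istar n m p" p
    using assms by unfold_locales (auto simp: S_def)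
  have "R_m n m p i = flattened i" for i
    using False by (simp add: R_m_def flattened_def tail_average_def)
  then show thesis using that tail_flattening_axioms by blast
qed

theorem corollary3:
  fixes n m :: nat and p :: "nat \<Rightarrow> real" and f :: "nat \<Rightarrow> nat"
  assumes "n > m" and "m \<ge> 2"
    and "\<And>i. i \<in> {1..n} \<Longrightarrow> p i \<ge> 0"
    and "(\<Sum>i=1..n. p i) = 1"
    and "\<And>i j. 1 \<le> i \<Longrightarrow> i \<le> j \<Longrightarrow> j \<le> n \<Longrightarrow> p i \<ge> p j"
    and "f ` {1..n} = {1..m}"
  shows "entropy_bits m (push_dist n f p) \<le> entropy_bits m (R_m n m p)"
proof -
  obtain k where flattening: "tail_flattening n m k p"
    and R_m_eq: "\<And>i. i \<in> {1..m} \<Longrightarrow> R_m n m p i = tail_flattening.flattened n m k p i"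
    using R_m_eq_flattened assms(1-5) by blast
  interpret tail_flattening n m k p by (fact flattening)
  have "entropy_bits m (push_dist n f p) \<le> entropy_bits m flattened"
    using entropy_push_dist_le_entropy_flattened[OF assms(6)] .
  also have "\<dots> = entropy_bits m (R_m n m p)"
    unfolding entropy_bits_def using R_m_eq by (intro arg_cong[where f = uminus] sum.cong) auto
  finally show ?thesis .
qed

end
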